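(* There is an absolute constant $C>0$ such that the following holds. Let $0<\delta\le\frac14$, $0<a<\pi$, $\lambda\ge1$ and $M\ge1$. Let $g$ be a continuous function on the closed unit disk, analytic on its interior, satisfying $|g(\delta)|\ge1$ and, for every $0<\gamma\le1$, $|z|\le1-\gamma\Rightarrow|g(z)|\le\frac{\lambda M}{\gamma}$. Let $\Gamma$ be the circle with center $\delta$ and radius $1-\delta$, and let $J$ be the closed arc of $\Gamma$ with midpoint $1$ and arc length $a$. Then $$\max_{z\in J}|g(z)|\ge\left(\frac{\delta}{\lambda M}\right)^{C/a}.$$
   Context: The paper writes the bound as $(\delta/(\lambda M))^{O(1/a)}$, where $O(\cdot)$ hides an absolute constant. *)

theory Defs
  imports "HOL-Analysis.Analysis"
begin

text \<open>The closed arc of the circle with centre delta and radius 1 - delta, with midpoint 1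
  and arc length a: the points delta + (1 - delta) e^{i theta} with
  |theta| * (1 - delta) <= a / 2.\<close>
definition arcJ :: "real \<Rightarrow> real \<Rightarrow> complex set" where
  "arcJ \<delta> a = {complex_of_real \<delta> + complex_of_real (1 - \<delta>) * cis \<theta> | \<theta>.
                  \<bar>\<theta>\<bar> \<le> a / (2 * (1 - \<delta>))}"

end

theory Submission
  imports Defs "HOL-Complex_Analysis.Complex_Analysis"
begin

text \<open>Transplant \<open>g\<close> to the unit disk by \<open>F(w) = g(\<delta> + (1 - \<delta>) w) (1 - w)\<^sup>2\<close>.
  Since \<open>1 - |\<delta> + (1 - \<delta>) w|\<^sup>2 \<ge> \<delta> (1 - \<delta>) |1 - w|\<^sup>2\<close>, the growth bound
  \<open>\<lambda>M/\<gamma>\<close> makes \<open>F\<close> bounded by \<open>B = 2\<lambda>M/(\<delta>(1 - \<delta>))\<close> on the closed disk, and on the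
  arc of the unit circle corresponding to \<open>J\<close> it is at most \<open>4 max\<^sub>J |g|\<close>.
  For \<open>n = \<lceil>2\<pi>/a\<rceil>\<close>, every point of the unit circle is moved into that arc by some
  \<open>n\<close>-th root of unity, so the product of the \<open>n\<close> rotated copies of \<open>F\<close> is at most
  \<open>4 max\<^sub>J |g| B\<^bsup>n-1\<^esup>\<close> on the circle, while at \<open>0\<close> it equals \<open>g(\<delta>)\<^sup>n\<close>, of modulus at
  least \<open>1\<close>. The maximum modulus principle then yields the bound with \<open>C = 7\<pi>\<close>.\<close>

lemma norm_affine_combination_sq:
  fixes d r :: real and w :: complex
  assumes "d + r = 1"
  shows "(norm (of_real d + of_real r * w))\<^sup>2 = d + r * (norm w)\<^sup>2 - d * r * (norm (1 - w))\<^sup>2"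
proof -
  have d: "d = 1 - r" using assms by simp
  show ?thesis unfolding cmod_power2 d by (simp add: power2_eq_square algebra_simps)
qed

lemma norm_affine_combination_le_1:
  fixes d :: real and w :: complex
  assumes "0 \<le> d" "d \<le> 1" "norm w \<le> 1"
  shows "norm (of_real d + of_real (1 - d) * w) \<le> 1"
proof -
  have "(norm (of_real d + of_real (1 - d) * w))\<^sup>2 \<le> d + (1 - d) * (norm w)\<^sup>2"
    using norm_affine_combination_sq[of d "1 - d" w] assms by simp
  also have "\<dots> \<le> d + (1 - d)"
    using assms by (intro add_left_mono mult_left_le) (auto simp: power_le_one)
  finally show ?thesis by (simp add: power_le_one_iff)
qed

lemma norm_affine_combination_less_1:
  fixes d :: real and w :: complex
  assumes "0 \<le> d" "d < 1" "norm w < 1"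
  shows "norm (of_real d + of_real (1 - d) * w) < 1"
proof -
  have "(norm (of_real d + of_real (1 - d) * w))\<^sup>2 \<le> d + (1 - d) * (norm w)\<^sup>2"
    using norm_affine_combination_sq[of d "1 - d" w] assms by simp
  also have "\<dots> < d + (1 - d) * 1"
    using assms by (intro add_strict_left_mono mult_strict_left_mono) (auto simp: power_less_one_iff)
  finally show ?thesis by (simp add: power_less_one_iff)
qed

text \<open>The affine map sends the unit circle onto the circle \<open>\<Gamma>\<close> of centre \<open>\<delta>\<close> and radius
  \<open>1 - \<delta>\<close>, fixing \<open>1\<close>; the factor \<open>(1 - w)\<^sup>2\<close> absorbs the growth of \<open>g\<close> near \<open>1\<close>,
  where \<open>\<Gamma>\<close> touches the unit circle.\<close>

definition transplant :: "real \<Rightarrow> (complex \<Rightarrow> complex) \<Rightarrow> complex \<Rightarrow> complex" where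
  "transplant \<delta> g w = g (of_real \<delta> + of_real (1 - \<delta>) * w) * (1 - w)\<^sup>2"

lemma transplant_holomorphic_on:
  assumes "0 \<le> \<delta>" "\<delta> < 1" and holo: "g holomorphic_on ball 0 1"
  shows "transplant \<delta> g holomorphic_on ball 0 1"
proof -
  define \<phi> where "\<phi> w = of_real \<delta> + of_real (1 - \<delta>) * w" for w :: complex
  have "\<phi> ` ball 0 1 \<subseteq> ball 0 1"
    unfolding \<phi>_def using assms norm_affine_combination_less_1 by auto
  moreover have "\<phi> holomorphic_on ball 0 1"
    unfolding \<phi>_def by (intro holomorphic_intros)
  ultimately have "(g \<circ> \<phi>) holomorphic_on ball 0 1"
    by (intro holomorphic_on_compose_gen[OF _ holo])
  then show ?thesis
    unfolding transplant_def[abs_def] \<phi>_def o_def by (intro holomorphic_intros)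
qed

lemma continuous_on_transplant:
  assumes "0 \<le> \<delta>" "\<delta> \<le> 1" and cont: "continuous_on (cball 0 1) g"
  shows "continuous_on (cball 0 1) (transplant \<delta> g)"
proof -
  define \<phi> where "\<phi> w = of_real \<delta> + of_real (1 - \<delta>) * w" for w :: complex
  have "\<phi> ` cball 0 1 \<subseteq> cball 0 1"
    unfolding \<phi>_def using assms norm_affine_combination_le_1 by auto
  moreover have "continuous_on (cball 0 1) \<phi>"
    unfolding \<phi>_def by (intro continuous_intros)
  ultimately have "continuous_on (cball 0 1) (\<lambda>w. g (\<phi> w))"
    by (intro continuous_on_compose2[OF cont])
  then show ?thesis
    unfolding transplant_def[abs_def] \<phi>_def by (intro continuous_intros)
qed

lemma norm_transplant_le:
  fixes d L :: real and g :: "complex \<Rightarrow> complex" and w :: complex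
  assumes d: "0 < d" "d < 1" and L: "L \<ge> 0"
    and growth: "\<And>\<gamma> z. 0 < \<gamma> \<Longrightarrow> \<gamma> \<le> 1 \<Longrightarrow> norm z \<le> 1 - \<gamma> \<Longrightarrow> norm (g z) \<le> L / \<gamma>"
    and w: "norm w \<le> 1"
  shows "norm (transplant d g w) \<le> 2 * L / (d * (1 - d))"
proof (cases "w = 1")
  case True
  then show ?thesis using d L by (simp add: transplant_def)
next
  case False
  define z where "z = of_real d + of_real (1 - d) * w"
  define \<gamma> where "\<gamma> = 1 - norm z"
  have dist_pos: "d * (1 - d) * (norm (1 - w))\<^sup>2 > 0"
    using d False by simp
  have "(1 - d) * (norm w)\<^sup>2 \<le> 1 - d"
    using d w by (intro mult_left_le) (auto simp: power_le_one)
  then have dist_le: "d * (1 - d) * (norm (1 - w))\<^sup>2 \<le> 1 - (norm z)\<^sup>2"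
    using norm_affine_combination_sq[of d "1 - d" w] unfolding z_def by simp
  then have "(norm z)\<^sup>2 < 1"
    using dist_pos by linarith
  then have "norm z < 1"
    by (simp add: power_less_one_iff)
  then have \<gamma>: "0 < \<gamma>" "\<gamma> \<le> 1"
    unfolding \<gamma>_def by auto
  have growth_z: "norm (g z) \<le> L / \<gamma>"
    using growth[OF \<gamma>] unfolding \<gamma>_def by simp
  have "1 - (norm z)\<^sup>2 = \<gamma> * (1 + norm z)"
    unfolding \<gamma>_def by (simp add: algebra_simps power2_eq_square)
  also have "\<dots> \<le> 2 * \<gamma>"
    using \<gamma> \<open>norm z < 1\<close> by simp
  finally have "d * (1 - d) * (norm (1 - w))\<^sup>2 \<le> 2 * \<gamma>"
    using dist_le by linarith
  with growth_z have "norm (g z) * (d * (1 - d) * (norm (1 - w))\<^sup>2) \<le> L / \<gamma> * (2 * \<gamma>)"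
    by (rule mult_mono) (use L \<gamma> dist_pos in auto)
  then have "norm (g z) * (norm (1 - w))\<^sup>2 * (d * (1 - d)) \<le> 2 * L"
    using \<gamma> by (simp add: algebra_simps)
  then show ?thesis
    using d unfolding transplant_def z_def by (simp add: norm_mult norm_power pos_le_divide_eq)
qed

lemma norm_transplant_cis_le:
  "norm (transplant \<delta> g (cis \<theta>)) \<le> 4 * norm (g (of_real \<delta> + of_real (1 - \<delta>) * cis \<theta>))"
proof -
  have "(norm (1 - cis \<theta>))\<^sup>2 \<le> 2\<^sup>2"
    using norm_triangle_ineq4[of 1 "cis \<theta>"] by (intro power_mono) auto
  then have "norm (g (of_real \<delta> + of_real (1 - \<delta>) * cis \<theta>)) * (norm (1 - cis \<theta>))\<^sup>2
      \<le> norm (g (of_real \<delta> + of_real (1 - \<delta>) * cis \<theta>)) * 2\<^sup>2"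
    by (rule mult_left_mono) simp
  then show ?thesis
    unfolding transplant_def by (simp add: norm_mult norm_power mult.commute)
qed

lemma unimodular_rotation_into_arc:
  fixes n :: nat and w :: complex
  assumes n: "n > 0" and w: "norm w = 1"
  obtains k \<theta> where "k < n" "\<bar>\<theta>\<bar> \<le> pi / n" "cis (2 * pi * k / n) * w = cis \<theta>"
proof -
  define \<phi> where "\<phi> = Arg w"
  have "w \<noteq> 0"
    using w by auto
  then have w_eq: "w = cis \<phi>"
    using cis_Arg[of w] w unfolding \<phi>_def by (auto simp: sgn_div_norm)
  define x where "x = - \<phi> * n / (2 * pi)"
  define j where "j = round x"
  define \<theta> where "\<theta> = \<phi> + 2 * pi * j / n"
  have "\<theta> = 2 * pi / n * (j - x)"
    using n unfolding \<theta>_def x_def by (simp add: field_simps)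
  then have "\<bar>\<theta>\<bar> = 2 * pi / n * \<bar>j - x\<bar>"
    by (simp add: abs_mult)
  also have "\<dots> \<le> 2 * pi / n * (1 / 2)"
    using of_int_round_abs_le[of x] unfolding j_def by (intro mult_left_mono) auto
  finally have \<theta>_le: "\<bar>\<theta>\<bar> \<le> pi / n"
    by simp
  define k where "k = nat (j mod int n)"
  define q where "q = j div int n"
  have "k < n"
    using n unfolding k_def by (simp add: nat_less_iff)
  have "j = int n * q + int k"
    using n unfolding k_def q_def by simp
  then have "2 * pi * j / n = 2 * pi * k / n + 2 * pi * q"
    using n by (simp add: field_simps)
  then have "cis (2 * pi * j / n) = cis (2 * pi * k / n)"
    by (simp add: cis_mult[symmetric])
  then have "cis (2 * pi * k / n) * w = cis \<theta>"
    unfolding w_eq \<theta>_def by (simp add: cis_mult[symmetric])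
  then show thesis
    using that \<open>k < n\<close> \<theta>_le by blast
qed

lemma norm_power_at_0_le_arc_bound:
  fixes F :: "complex \<Rightarrow> complex" and n :: nat and B \<epsilon> :: real
  assumes n: "n > 0"
    and holo: "F holomorphic_on ball 0 1" and cont: "continuous_on (cball 0 1) F"
    and disk: "\<And>w. norm w \<le> 1 \<Longrightarrow> norm (F w) \<le> B"
    and arc: "\<And>\<theta>. \<bar>\<theta>\<bar> \<le> pi / n \<Longrightarrow> norm (F (cis \<theta>)) \<le> \<epsilon>"
  shows "norm (F 0) ^ n \<le> \<epsilon> * B ^ (n - 1)"
proof -
  define \<omega> where "\<omega> k = cis (2 * pi * k / n)" for k :: nat
  define H where "H w = (\<Prod>k<n. F (\<omega> k * w))" for w
  have "\<epsilon> \<ge> 0"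
    using order_trans[OF norm_ge_zero arc[of 0]] by simp
  have "(\<lambda>w. F (\<omega> k * w)) holomorphic_on ball 0 1" for k
    by (rule holomorphic_on_compose_gen[OF _ holo, unfolded o_def])
      (auto intro!: holomorphic_intros simp: \<omega>_def norm_mult)
  then have "H holomorphic_on ball 0 1"
    unfolding H_def by (intro holomorphic_intros)
  have "continuous_on (cball 0 1) (\<lambda>w. F (\<omega> k * w))" for k
    by (rule continuous_on_compose2[OF cont])
      (auto intro!: continuous_intros simp: \<omega>_def norm_mult)
  then have "continuous_on (cball 0 1) H"
    unfolding H_def by (intro continuous_intros)
  \<comment> \<open>on the unit circle one of the n factors lies on the arc, the others are bounded by B\<close>
  have H_circle: "norm (H w) \<le> \<epsilon> * B ^ (n - 1)" if "norm w = 1" for w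
  proof -
    obtain k \<theta> where k: "k < n" and \<theta>: "\<bar>\<theta>\<bar> \<le> pi / n" "cis (2 * pi * k / n) * w = cis \<theta>"
      by (rule unimodular_rotation_into_arc[OF n \<open>norm w = 1\<close>])
    have factor_le: "norm (F (\<omega> j * w)) \<le> B" for j
      using \<open>norm w = 1\<close> by (intro disk) (simp add: \<omega>_def norm_mult)
    have "norm (F (\<omega> k * w)) \<le> \<epsilon>"
      using arc[OF \<theta>(1)] \<theta>(2) unfolding \<omega>_def by simp
    have "norm (H w) = (\<Prod>j<n. norm (F (\<omega> j * w)))"
      unfolding H_def by (simp add: prod_norm)
    also have "\<dots> = norm (F (\<omega> k * w)) * (\<Prod>j\<in>{..<n} - {k}. norm (F (\<omega> j * w)))"
      using k by (intro prod.remove) auto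
    also have "\<dots> \<le> \<epsilon> * (\<Prod>j\<in>{..<n} - {k}. B)"
      using \<open>norm (F (\<omega> k * w)) \<le> \<epsilon>\<close> factor_le \<open>\<epsilon> \<ge> 0\<close>
      by (intro mult_mono prod_mono prod_nonneg) auto
    also have "\<dots> = \<epsilon> * B ^ (n - 1)"
      using k by simp
    finally show ?thesis .
  qed
  have "norm (H 0) \<le> \<epsilon> * B ^ (n - 1)"
    by (rule maximum_modulus_frontier[of H "cball 0 1"])
      (use \<open>H holomorphic_on ball 0 1\<close> \<open>continuous_on (cball 0 1) H\<close> H_circle in auto)
  moreover have "H 0 = F 0 ^ n"
    unfolding H_def by simp
  ultimately show ?thesis
    by (simp add: norm_power)
qed

lemma powr_power_estimate_less_1:
  fixes t c B :: real and n :: nat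
  assumes t: "4 \<le> t" and B: "0 \<le> B" "B \<le> t\<^sup>2" and c: "1 < c"
    and n: "1 \<le> n" "n \<le> 2 * c + 1"
  shows "4 * t powr (- (7 * c)) * B ^ (n - 1) < 1"
proof -
  have "4 * B ^ (n - 1) \<le> t * (t\<^sup>2) ^ (n - 1)"
    using t B by (intro mult_mono power_mono) auto
  also have "\<dots> = t ^ (2 * n - 1)"
    using n by (cases n) (auto simp: power_mult[symmetric])
  also have "\<dots> \<le> t ^ (2 * n)"
    using t by (intro power_increasing) auto
  also have "\<dots> = t powr (2 * n)"
    using t powr_realpow[of t "2 * n"] by simp
  also have "\<dots> \<le> t powr (6 * c)"
    using t c n by (intro powr_mono) auto
  finally have "t powr (- (7 * c)) * (4 * B ^ (n - 1)) \<le> t powr (- (7 * c)) * t powr (6 * c)"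
    by (rule mult_left_mono) simp
  also have "\<dots> = t powr (- c)"
    by (simp flip: powr_add)
  also have "\<dots> < 1"
    using t c by (intro powr_less_one) auto
  finally show ?thesis
    by (simp add: mult_ac)
qed

lemma arc_estimate_less_1:
  fixes d L a :: real and n :: nat
  assumes d: "0 < d" "d \<le> 1/4" and L: "L \<ge> 1" and a: "0 < a" "a < pi"
    and n: "1 \<le> n" "n \<le> 2 * pi / a + 1"
  shows "4 * (d / L) powr (7 * pi / a) * (2 * L / (d * (1 - d))) ^ (n - 1) < 1"
proof -
  define t where "t = L / d"
  have "4 * d \<le> L"
    using d L by linarith
  then have t: "4 \<le> t"
    unfolding t_def using d by (simp add: le_divide_eq)
  have "2 \<le> t * (1 - d)"
    using mult_mono[of 4 t "3/4" "1 - d"] d t by simp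
  then have "2 / (1 - d) \<le> t"
    using d by (simp add: divide_le_eq)
  then have "t * (2 / (1 - d)) \<le> t\<^sup>2"
    using t unfolding power2_eq_square by (intro mult_left_mono) auto
  moreover have "2 * L / (d * (1 - d)) = t * (2 / (1 - d))"
    unfolding t_def by simp
  ultimately have B_le: "2 * L / (d * (1 - d)) \<le> t\<^sup>2"
    by simp
  have B_nonneg: "0 \<le> 2 * L / (d * (1 - d))"
    using d L by simp
  have c: "1 < pi / a" and n_le: "n \<le> 2 * (pi / a) + 1"
    using a n by simp_all
  from t B_nonneg B_le c n(1) n_le
  have "4 * t powr (- (7 * (pi / a))) * (2 * L / (d * (1 - d))) ^ (n - 1) < 1"
    by (rule powr_power_estimate_less_1)
  moreover have "(d / L) powr (7 * pi / a) = t powr (- (7 * (pi / a)))"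
    unfolding t_def using d L by (simp add: powr_minus inverse_powr[symmetric])
  ultimately show ?thesis
    by simp
qed

lemma arc_count_exists:
  fixes a :: real
  assumes "0 < a"
  obtains n :: nat where "1 \<le> n" "pi / n \<le> a / 2" "n \<le> 2 * pi / a + 1"
proof -
  define n where "n = nat \<lceil>2 * pi / a\<rceil>"
  have "0 < 2 * pi / a"
    using assms by simp
  then have "real n = \<lceil>2 * pi / a\<rceil>"
    unfolding n_def by simp
  then have n_ge: "2 * pi / a \<le> n" and "n \<le> 2 * pi / a + 1"
    by linarith+
  moreover from n_ge \<open>0 < 2 * pi / a\<close> have "1 \<le> n"
    by linarith
  moreover from n_ge \<open>1 \<le> n\<close> have "pi / n \<le> a / 2"
    using assms by (simp add: field_simps)
  ultimately show thesis
    using that by blast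
qed

lemma arcJ_memI:
  "\<bar>\<theta>\<bar> \<le> a / (2 * (1 - \<delta>)) \<Longrightarrow> of_real \<delta> + of_real (1 - \<delta>) * cis \<theta> \<in> arcJ \<delta> a"
  unfolding arcJ_def by blast

lemma arcJ_norm_lower_bound:
  fixes g :: "complex \<Rightarrow> complex" and \<delta> a L :: real
  assumes \<delta>: "0 < \<delta>" "\<delta> \<le> 1/4" and a: "0 < a" "a < pi" and L: "L \<ge> 1"
    and cont: "continuous_on (cball 0 1) g" and holo: "g holomorphic_on ball 0 1"
    and g_\<delta>: "norm (g \<delta>) \<ge> 1"
    and growth: "\<And>\<gamma> z. 0 < \<gamma> \<Longrightarrow> \<gamma> \<le> 1 \<Longrightarrow> norm z \<le> 1 - \<gamma> \<Longrightarrow> norm (g z) \<le> L / \<gamma>"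
  shows "\<exists>z\<in>arcJ \<delta> a. norm (g z) \<ge> (\<delta> / L) powr (7 * pi / a)"
proof (rule ccontr)
  define \<eta> where "\<eta> = (\<delta> / L) powr (7 * pi / a)"
  assume "\<not> ?thesis"
  then have small: "norm (g z) < \<eta>" if "z \<in> arcJ \<delta> a" for z
    using that unfolding \<eta>_def by (auto simp: not_le)
  obtain n :: nat where n: "1 \<le> n" "pi / n \<le> a / 2" "n \<le> 2 * pi / a + 1"
    by (rule arc_count_exists[OF a(1)])
  have arc: "norm (transplant \<delta> g (cis \<theta>)) \<le> 4 * \<eta>" if "\<bar>\<theta>\<bar> \<le> pi / n" for \<theta>
  proof -
    have "a / 2 \<le> a / (2 * (1 - \<delta>))"
      using a \<delta> by (intro divide_left_mono) auto
    then have "of_real \<delta> + of_real (1 - \<delta>) * cis \<theta> \<in> arcJ \<delta> a"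
      using that n(2) by (intro arcJ_memI) linarith
    then show ?thesis
      using small norm_transplant_cis_le[of \<delta> g \<theta>] by fastforce
  qed
  have "1 \<le> norm (g \<delta>) ^ n"
    using g_\<delta> by (simp add: one_le_power)
  also have "\<dots> = norm (transplant \<delta> g 0) ^ n"
    by (simp add: transplant_def)
  also have "\<dots> \<le> 4 * \<eta> * (2 * L / (\<delta> * (1 - \<delta>))) ^ (n - 1)"
  proof (rule norm_power_at_0_le_arc_bound)
    show "transplant \<delta> g holomorphic_on ball 0 1"
      using \<delta> holo by (intro transplant_holomorphic_on) auto
    show "continuous_on (cball 0 1) (transplant \<delta> g)"
      using \<delta> cont by (intro continuous_on_transplant) auto
    show "norm (transplant \<delta> g w) \<le> 2 * L / (\<delta> * (1 - \<delta>))" if "norm w \<le> 1" for w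
      by (rule norm_transplant_le[OF _ _ _ growth that]) (use \<delta> L in auto)
  qed (use n(1) arc in auto)
  also have "\<dots> < 1"
    unfolding \<eta>_def using \<delta> L a n by (intro arc_estimate_less_1)
  finally show False
    by simp
qed

theorem theorem5p5:
  shows "\<exists>C>0. \<forall>(\<delta>::real) (a::real) (lam::real) (M::real) (g::complex \<Rightarrow> complex).
    0 < \<delta> \<and> \<delta> \<le> 1/4 \<and> 0 < a \<and> a < pi \<and> lam \<ge> 1 \<and> M \<ge> 1 \<and>
    continuous_on (cball 0 1) g \<and> g holomorphic_on ball 0 1 \<and>
    norm (g (complex_of_real \<delta>)) \<ge> 1 \<and>
    (\<forall>(\<gamma>::real) (z::complex). 0 < \<gamma> \<and> \<gamma> \<le> 1 \<and> norm z \<le> 1 - \<gamma> \<longrightarrow> norm (g z) \<le> lam * M / \<gamma>)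
    \<longrightarrow> (\<exists>z\<in>arcJ \<delta> a. norm (g z) \<ge> (\<delta> / (lam * M)) powr (C / a))"
proof (intro exI[of _ "7 * pi"] conjI allI impI)
  fix \<delta> a lam M :: real and g :: "complex \<Rightarrow> complex"
  assume "0 < \<delta> \<and> \<delta> \<le> 1/4 \<and> 0 < a \<and> a < pi \<and> lam \<ge> 1 \<and> M \<ge> 1 \<and>
    continuous_on (cball 0 1) g \<and> g holomorphic_on ball 0 1 \<and>
    norm (g (complex_of_real \<delta>)) \<ge> 1 \<and>
    (\<forall>(\<gamma>::real) (z::complex). 0 < \<gamma> \<and> \<gamma> \<le> 1 \<and> norm z \<le> 1 - \<gamma> \<longrightarrow> norm (g z) \<le> lam * M / \<gamma>)"
  then show "\<exists>z\<in>arcJ \<delta> a. norm (g z) \<ge> (\<delta> / (lam * M)) powr (7 * pi / a)"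
    by (intro arcJ_norm_lower_bound mult_ge1_I) blast+
qed simp

end
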